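(* Let $\Omega\subset\mathbb{R}^N$ be a bounded domain with smooth boundary, $a>0$, $b\in L^\infty(\Omega)$ nonnegative, and suppose there is an open set $\Omega_0$ with smooth boundary such that $b=0$ a.e. on $\Omega_0$ and for every open $\Omega'\Subset\Omega\setminus\Omega_0$ there is $\underline b>0$ with $b\ge\underline b$ a.e. on $\Omega'$. Let $u_0\in H_0^1(\Omega)\cap L^\infty(\Omega)$ with $0\le u_0\le1$ a.e. in $\Omega\setminus\Omega_0$, and for $p>1$ let $u_p$ be the unique global positive solution of $\partial_tu-\Delta u=au-b(x)u^p$ in $\Omega\times(0,\infty)$, $u=0$ on $\partial\Omega\times(0,\infty)$, $u(0)=u_0$. Let $u$ be a limit of $u_p$ as $p\to+\infty$ along a subsequence, in the sense that for every $T>0$, $u_p\to u$ strongly in $L^2(\Omega\times(0,T))$, weakly in $L^2(0,T;H_0^1(\Omega))$, and $\partial_tu_p\rightharpoonup\partial_tu$ weakly in $L^2(\Omega\times(0,T))$. Then $u(t)\in\mathbb{K}_0$ for a.e. $t>0$, where $\mathbb{K}_0=\{w\in H_0^1(\Omega):w\le1\text{ a.e. in }\Omega\setminus\Omega_0\}$. *)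

theory Defs
  imports "HOL-Analysis.Analysis"
begin

coinductive smooth_on :: "'a::real_normed_vector set \<Rightarrow> ('a \<Rightarrow> real) \<Rightarrow> bool" where
  "(\<forall>x\<in>U. f differentiable (at x)) \<Longrightarrow>
   (\<forall>v. smooth_on U (\<lambda>x. frechet_derivative f (at x) v)) \<Longrightarrow> smooth_on U f"

definition test_fun :: "'a::euclidean_space set \<Rightarrow> ('a \<Rightarrow> real) \<Rightarrow> bool" where
  "test_fun U \<phi> \<longleftrightarrow> smooth_on UNIV \<phi> \<and> compact (closure {x. \<phi> x \<noteq> 0})
      \<and> closure {x. \<phi> x \<noteq> 0} \<subseteq> U"

definition grad :: "('a::euclidean_space \<Rightarrow> real) \<Rightarrow> 'a \<Rightarrow> 'a" where
  "grad \<phi> x = (\<Sum>i\<in>Basis. frechet_derivative \<phi> (at x) i *\<^sub>R i)"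

definition gradx :: "(real \<times> 'a::euclidean_space \<Rightarrow> real) \<Rightarrow> real \<times> 'a \<Rightarrow> 'a" where
  "gradx \<psi> z = (\<Sum>i\<in>Basis. frechet_derivative \<psi> (at z) (0, i) *\<^sub>R i)"

definition dt :: "(real \<times> 'a::euclidean_space \<Rightarrow> real) \<Rightarrow> real \<times> 'a \<Rightarrow> real" where
  "dt \<psi> z = frechet_derivative \<psi> (at z) (1, 0)"

definition smooth_boundary :: "'a::euclidean_space set \<Rightarrow> bool" where
  "smooth_boundary \<Omega> \<longleftrightarrow> (\<forall>x0\<in>frontier \<Omega>. \<exists>U \<rho>. open U \<and> x0 \<in> U \<and> smooth_on U \<rho> \<and>
      (\<forall>x\<in>U. grad \<rho> x \<noteq> 0) \<and> \<Omega> \<inter> U = {x\<in>U. \<rho> x < 0})"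

definition smooth_domain :: "'a::euclidean_space set \<Rightarrow> bool" where
  "smooth_domain \<Omega> \<longleftrightarrow> open \<Omega> \<and> connected \<Omega> \<and> \<Omega> \<noteq> {} \<and> bounded \<Omega> \<and> smooth_boundary \<Omega>"

definition L2_on :: "'b::euclidean_space set \<Rightarrow> ('b \<Rightarrow> real) \<Rightarrow> bool" where
  "L2_on S f \<longleftrightarrow> set_borel_measurable lborel S f \<and> set_integrable lborel S (\<lambda>x. (f x)\<^sup>2)"

definition L2v_on :: "'b::euclidean_space set \<Rightarrow> ('b \<Rightarrow> 'c::euclidean_space) \<Rightarrow> bool" where
  "L2v_on S g \<longleftrightarrow> set_borel_measurable lborel S g \<and> set_integrable lborel S (\<lambda>x. (norm (g x))\<^sup>2)"

definition Linfty_on :: "'b::euclidean_space set \<Rightarrow> ('b \<Rightarrow> real) \<Rightarrow> bool" where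
  "Linfty_on S f \<longleftrightarrow> set_borel_measurable lborel S f \<and> (\<exists>M. AE x in lborel. x \<in> S \<longrightarrow> \<bar>f x\<bar> \<le> M)"

definition H01_grad :: "'a::euclidean_space set \<Rightarrow> ('a \<Rightarrow> real) \<Rightarrow> ('a \<Rightarrow> 'a) \<Rightarrow> bool" where
  "H01_grad \<Omega> w g \<longleftrightarrow> L2_on \<Omega> w \<and> L2v_on \<Omega> g \<and>
     (\<exists>\<phi>. (\<forall>k. test_fun \<Omega> (\<phi> k)) \<and>
        (\<lambda>k. LINT x:\<Omega>|lborel. (\<phi> k x - w x)\<^sup>2) \<longlonglongrightarrow> 0 \<and>
        (\<lambda>k. LINT x:\<Omega>|lborel. (norm (grad (\<phi> k) x - g x))\<^sup>2) \<longlonglongrightarrow> 0)"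

definition H01 :: "'a::euclidean_space set \<Rightarrow> ('a \<Rightarrow> real) \<Rightarrow> bool" where
  "H01 \<Omega> w \<longleftrightarrow> (\<exists>g. H01_grad \<Omega> w g)"

definition K0 :: "'a::euclidean_space set \<Rightarrow> 'a set \<Rightarrow> ('a \<Rightarrow> real) set" where
  "K0 \<Omega> \<Omega>0 = {w. H01 \<Omega> w \<and> (AE x in lborel. x \<in> \<Omega> - \<Omega>0 \<longrightarrow> w x \<le> 1)}"

text \<open>Space-time cylinder Omega x (0,T), written with time first.\<close>
definition cyl :: "'a::euclidean_space set \<Rightarrow> real \<Rightarrow> (real \<times> 'a) set" where
  "cyl \<Omega> T = {0<..<T} \<times> \<Omega>"

definition L2H01 :: "'a::euclidean_space set \<Rightarrow> real \<Rightarrow> (real \<Rightarrow> 'a \<Rightarrow> real) \<Rightarrow> (real \<Rightarrow> 'a \<Rightarrow> 'a) \<Rightarrow> bool" where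
  "L2H01 \<Omega> T u G \<longleftrightarrow> L2_on (cyl \<Omega> T) (\<lambda>z. u (fst z) (snd z)) \<and>
     L2v_on (cyl \<Omega> T) (\<lambda>z. G (fst z) (snd z)) \<and>
     (AE t in lborel. t \<in> {0<..<T} \<longrightarrow> H01_grad \<Omega> (u t) (G t))"

definition time_deriv :: "'a::euclidean_space set \<Rightarrow> real \<Rightarrow> (real \<Rightarrow> 'a \<Rightarrow> real) \<Rightarrow> (real \<Rightarrow> 'a \<Rightarrow> real) \<Rightarrow> bool" where
  "time_deriv \<Omega> T u D \<longleftrightarrow> L2_on (cyl \<Omega> T) (\<lambda>z. D (fst z) (snd z)) \<and>
     (\<forall>\<psi>. test_fun (cyl \<Omega> T) \<psi> \<longrightarrow>
        (LINT z:cyl \<Omega> T|lborel. u (fst z) (snd z) * dt \<psi> z)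
          = - (LINT z:cyl \<Omega> T|lborel. D (fst z) (snd z) * \<psi> z))"

definition global_solution ::
  "'a::euclidean_space set \<Rightarrow> real \<Rightarrow> ('a \<Rightarrow> real) \<Rightarrow> real \<Rightarrow> ('a \<Rightarrow> real) \<Rightarrow>
   (real \<Rightarrow> 'a \<Rightarrow> real) \<Rightarrow> (real \<Rightarrow> 'a \<Rightarrow> 'a) \<Rightarrow> (real \<Rightarrow> 'a \<Rightarrow> real) \<Rightarrow> bool" where
  "global_solution \<Omega> a b p u0 u G D \<longleftrightarrow>
     (\<forall>T>0. L2H01 \<Omega> T u G \<and> time_deriv \<Omega> T u D \<and>
        Linfty_on (cyl \<Omega> T) (\<lambda>z. u (fst z) (snd z)) \<and>
        (\<forall>\<psi>. test_fun (cyl \<Omega> T) \<psi> \<longrightarrow>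
           (LINT z:cyl \<Omega> T|lborel. D (fst z) (snd z) * \<psi> z + G (fst z) (snd z) \<bullet> gradx \<psi> z)
           = (LINT z:cyl \<Omega> T|lborel.
                (a * u (fst z) (snd z) - b (snd z) * u (fst z) (snd z) powr p) * \<psi> z))) \<and>
     (AE z in lborel. z \<in> {0<..} \<times> \<Omega> \<longrightarrow> u (fst z) (snd z) \<ge> 0) \<and>
     ((\<lambda>t. LINT x:\<Omega>|lborel. (u t x - u0 x)\<^sup>2) \<longlongrightarrow> 0) (at_right 0)"

definition weak_L2 :: "'b::euclidean_space set \<Rightarrow> (nat \<Rightarrow> 'b \<Rightarrow> real) \<Rightarrow> ('b \<Rightarrow> real) \<Rightarrow> bool" where
  "weak_L2 S F f \<longleftrightarrow> (\<forall>\<psi>. L2_on S \<psi> \<longrightarrow>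
     (\<lambda>k. LINT x:S|lborel. F k x * \<psi> x) \<longlonglongrightarrow> (LINT x:S|lborel. f x * \<psi> x))"

definition weak_L2v :: "'b::euclidean_space set \<Rightarrow> (nat \<Rightarrow> 'b \<Rightarrow> 'c::euclidean_space) \<Rightarrow> ('b \<Rightarrow> 'c) \<Rightarrow> bool" where
  "weak_L2v S F f \<longleftrightarrow> (\<forall>\<Psi>. L2v_on S \<Psi> \<longrightarrow>
     (\<lambda>k. LINT x:S|lborel. F k x \<bullet> \<Psi> x) \<longlonglongrightarrow> (LINT x:S|lborel. f x \<bullet> \<Psi> x))"

end

theory Submission
  imports Defs
begin

text \<open>Test the equation for U k against a bump function \<psi> supported in a small space-time
  ball around (t0, x0) with x0 outside the closure of \<Omega>0. Weak convergence of U k, of its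
  gradient and of its time derivative bounds the integral of b (U k)^(p k) \<psi> uniformly in k,
  and since b and \<psi> are bounded below near (t0, x0), so is the integral of (U k)^(p k) there.
  By Markov's inequality U k exceeds 1 + \<epsilon> only on a set of measure O((1 + \<epsilon>)^(- p k)), and
  strong L2 convergence turns this into u \<le> 1 a.e. near (t0, x0). A countable subcover extends
  the bound to (0, \<infinity>) \<times> (\<Omega> - closure \<Omega>0), the smooth boundary of \<Omega>0 is a null set, and Fubini
  gives u t \<le> 1 a.e. on \<Omega> - \<Omega>0 for a.e. t > 0; that u t lies in H01 is part of the assumed
  regularity of the limit.\<close>

section \<open>Smooth cutoff and bump functions\<close>

text \<open>cutoff_deriv k is the k-th derivative of exp(-1/s): differentiating Q(1/s) exp(-1/s)
  gives R(1/s) exp(-1/s) with R(y) = y^2 (Q(y) - Q'(y)).\<close>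
fun cutoff_poly :: "nat \<Rightarrow> real poly" where
  "cutoff_poly 0 = 1"
| "cutoff_poly (Suc k) = [:0, 0, 1:] * (cutoff_poly k - pderiv (cutoff_poly k))"

definition cutoff_deriv :: "nat \<Rightarrow> real \<Rightarrow> real" where
  "cutoff_deriv k s = (if s > 0 then poly (cutoff_poly k) (inverse s) * exp (- inverse s) else 0)"

abbreviation cutoff :: "real \<Rightarrow> real" where
  "cutoff \<equiv> cutoff_deriv 0"

lemma poly_over_exp_tendsto_0: "((\<lambda>x. poly P x / exp x) \<longlongrightarrow> (0::real)) at_top"
proof -
  have "((\<lambda>x. \<Sum>i\<le>degree P. coeff P i * (x ^ i / exp x)) \<longlongrightarrow> (\<Sum>i\<le>degree P. coeff P i * 0)) at_top"
    by (intro tendsto_sum tendsto_mult tendsto_const tendsto_power_div_exp_0)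
  then show ?thesis
    by (simp add: poly_altdef sum_divide_distrib)
qed

lemma cutoff_deriv_has_derivative_pos:
  assumes "s > 0"
  shows "(cutoff_deriv k has_real_derivative cutoff_deriv (Suc k) s) (at s)"
proof -
  have inv: "(inverse has_real_derivative - (inverse s ^ 2)) (at s)"
    using assms DERIV_inverse[of s UNIV] by (simp add: eval_nat_numeral)
  note d = DERIV_mult[OF DERIV_chain2[OF poly_DERIV inv] DERIV_chain2[OF DERIV_exp DERIV_minus[OF inv]],
      of "cutoff_poly k"]
  have "\<forall>\<^sub>F y in nhds s. poly (cutoff_poly k) (inverse y) * exp (- inverse y) = cutoff_deriv k y"
    using eventually_nhds_in_open[of "{0<..}" s] assms
    by (auto elim!: eventually_mono simp: cutoff_deriv_def)
  moreover have "poly (pderiv (cutoff_poly k)) (inverse s) * - (inverse s ^ 2) * exp (- inverse s)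
      + poly (cutoff_poly k) (inverse s) * (exp (- inverse s) * - (- (inverse s ^ 2)))
      = cutoff_deriv (Suc k) s"
    using assms by (simp add: cutoff_deriv_def algebra_simps power2_eq_square)
  ultimately show ?thesis
    using d by (simp add: DERIV_cong_ev[OF refl] mult_ac)
qed

text \<open>exp(-1/s) tends to 0 faster than any power of s as s tends to 0 from above.\<close>
lemma cutoff_deriv_has_derivative_0: "(cutoff_deriv k has_real_derivative 0) (at 0)"
proof -
  have "((\<lambda>x. (cutoff_deriv k (inverse x) - cutoff_deriv k 0) / inverse x) \<longlongrightarrow> 0) at_top"
  proof (rule Lim_transform_eventually[OF poly_over_exp_tendsto_0[of "pCons 0 (cutoff_poly k)"]])
    show "\<forall>\<^sub>F x in at_top. poly (pCons 0 (cutoff_poly k)) x / exp x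
        = (cutoff_deriv k (inverse x) - cutoff_deriv k 0) / inverse x"
      using eventually_gt_at_top[of 0]
      by eventually_elim (simp add: cutoff_deriv_def exp_minus field_simps)
  qed
  then have "((\<lambda>h. (cutoff_deriv k h - cutoff_deriv k 0) / h) \<longlongrightarrow> 0) (at_right 0)"
    by (simp add: at_right_to_top filterlim_filtermap o_def)
  moreover have "((\<lambda>h. (cutoff_deriv k h - cutoff_deriv k 0) / h) \<longlongrightarrow> 0) (at_left 0)"
  proof (rule Lim_transform_eventually[OF tendsto_const])
    show "\<forall>\<^sub>F x in at_left 0. 0 = (cutoff_deriv k x - cutoff_deriv k 0) / x"
      by (simp add: eventually_at_left_field cutoff_deriv_def) (metis lt_ex)
  qed
  ultimately show ?thesis
    by (simp add: has_field_derivative_iff filterlim_split_at cutoff_deriv_def)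
qed

lemma cutoff_deriv_has_derivative:
  "(cutoff_deriv k has_real_derivative cutoff_deriv (Suc k) s) (at s)"
proof -
  consider "s > 0" | "s = 0" | "s < 0" by linarith
  then show ?thesis
  proof cases
    case 3
    have ev: "\<forall>\<^sub>F y in nhds s. 0 = cutoff_deriv k y"
      using eventually_nhds_in_open[of "{..<0}" s] 3
      by (auto elim!: eventually_mono simp: cutoff_deriv_def)
    then have "(cutoff_deriv k has_real_derivative 0) (at s)"
      using DERIV_cong_ev[OF refl ev refl] DERIV_const[of 0] by blast
    then show ?thesis
      using 3 by (simp add: cutoff_deriv_def)
  qed (use cutoff_deriv_has_derivative_pos cutoff_deriv_has_derivative_0 cutoff_deriv_def in auto)
qed

lemma cutoff_eq: "cutoff s = (if s > 0 then exp (- inverse s) else 0)"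
  by (simp add: cutoff_deriv_def)

lemma cutoff_pos_iff: "cutoff s > 0 \<longleftrightarrow> s > 0"
  by (simp add: cutoff_eq)

lemma cutoff_nonneg: "cutoff s \<ge> 0"
  by (simp add: cutoff_eq)

lemma cutoff_le_1: "cutoff s \<le> 1"
  by (simp add: cutoff_eq)

lemma cutoff_mono: "0 < s \<Longrightarrow> s \<le> t \<Longrightarrow> cutoff s \<le> cutoff t"
  by (simp add: cutoff_eq le_imp_inverse_le)

text \<open>Closed under directional derivatives, hence contained in smooth_on UNIV by coinduction.\<close>
inductive_set smooth_class :: "('b::real_inner \<Rightarrow> real) set" where
  const: "(\<lambda>x. c) \<in> smooth_class"
| linear: "bounded_linear l \<Longrightarrow> l \<in> smooth_class"
| inner_self: "(\<lambda>x. x \<bullet> x) \<in> smooth_class"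
| add: "f \<in> smooth_class \<Longrightarrow> g \<in> smooth_class \<Longrightarrow> (\<lambda>x. f x + g x) \<in> smooth_class"
| mult: "f \<in> smooth_class \<Longrightarrow> g \<in> smooth_class \<Longrightarrow> (\<lambda>x. f x * g x) \<in> smooth_class"
| cutoff_deriv: "f \<in> smooth_class \<Longrightarrow> (\<lambda>x. cutoff_deriv k (f x)) \<in> smooth_class"

lemma smooth_class_has_derivative:
  assumes "f \<in> smooth_class"
  shows "\<exists>D. (\<forall>x. (f has_derivative D x) (at x)) \<and> (\<forall>v. (\<lambda>x. D x v) \<in> smooth_class)"
  using assms
proof induction
  case (const c)
  show ?case
    by (rule exI[of _ "\<lambda>x v. 0"]) (auto intro: smooth_class.const)
next
  case (linear l)
  show ?case
    by (rule exI[of _ "\<lambda>x. l"])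
      (auto intro: smooth_class.const bounded_linear_imp_has_derivative linear)
next
  case inner_self
  show ?case
    by (rule exI[of _ "\<lambda>x v. x \<bullet> v + v \<bullet> x"])
      (auto intro!: derivative_eq_intros smooth_class.linear smooth_class.add bounded_linear_add
        bounded_linear_inner_left bounded_linear_inner_right)
next
  case (add f g)
  then obtain Df Dg
    where "\<forall>x. (f has_derivative Df x) (at x)" "\<forall>v. (\<lambda>x. Df x v) \<in> smooth_class"
      and "\<forall>x. (g has_derivative Dg x) (at x)" "\<forall>v. (\<lambda>x. Dg x v) \<in> smooth_class"
    by blast
  then show ?case
    by (intro exI[of _ "\<lambda>x v. Df x v + Dg x v"]) (auto intro!: has_derivative_add smooth_class.add)
next
  case (mult f g)
  then obtain Df Dg
    where "\<forall>x. (f has_derivative Df x) (at x)" "\<forall>v. (\<lambda>x. Df x v) \<in> smooth_class"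
      and "\<forall>x. (g has_derivative Dg x) (at x)" "\<forall>v. (\<lambda>x. Dg x v) \<in> smooth_class"
    by blast
  with mult.hyps show ?case
    by (intro exI[of _ "\<lambda>x v. f x * Dg x v + Df x v * g x"])
      (auto intro!: has_derivative_mult smooth_class.add smooth_class.mult)
next
  case (cutoff_deriv f k)
  then obtain Df
    where "\<forall>x. (f has_derivative Df x) (at x)" "\<forall>v. (\<lambda>x. Df x v) \<in> smooth_class"
    by blast
  moreover have d: "(cutoff_deriv k has_derivative (\<lambda>h. cutoff_deriv (Suc k) y * h)) (at y)" for y
    using cutoff_deriv_has_derivative[of k y] by (simp add: has_field_derivative_def)
  ultimately show ?case
    using cutoff_deriv.hyps
    by (intro exI[of _ "\<lambda>x v. cutoff_deriv (Suc k) (f x) * Df x v"])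
      (auto intro!: has_derivative_compose[OF _ d] smooth_class.mult smooth_class.cutoff_deriv)
qed

lemma smooth_class_smooth_on:
  fixes f :: "'a::real_inner \<Rightarrow> real"
  assumes "f \<in> smooth_class"
  shows "smooth_on UNIV f"
  using assms
proof (coinduction arbitrary: f rule: smooth_on.coinduct)
  case (smooth_on f)
  then obtain D where D: "\<forall>x. (f has_derivative D x) (at x)" "\<forall>v. (\<lambda>x. D x v) \<in> smooth_class"
    using smooth_class_has_derivative by blast
  then have "frechet_derivative f (at x) = D x" for x
    by (metis frechet_derivative_at)
  with D show ?case
    by (auto simp: differentiable_def)
qed

lemma smooth_on_differentiable: "smooth_on U f \<Longrightarrow> x \<in> U \<Longrightarrow> f differentiable (at x)"
  by (auto elim: smooth_on.cases)

lemma smooth_on_directional_derivative: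
  "smooth_on U f \<Longrightarrow> smooth_on U (\<lambda>x. frechet_derivative f (at x) v)"
  by (auto elim: smooth_on.cases)

lemma smooth_on_continuous_on: "smooth_on U f \<Longrightarrow> continuous_on U f"
  by (meson continuous_at_imp_continuous_on differentiable_imp_continuous_within
      smooth_on_differentiable)

lemma continuous_on_gradx:
  assumes "smooth_on UNIV \<psi>"
  shows "continuous_on UNIV (gradx \<psi>)"
  unfolding gradx_def[abs_def]
  by (intro continuous_intros smooth_on_continuous_on smooth_on_directional_derivative assms)

definition bump :: "'a::real_inner \<Rightarrow> real \<Rightarrow> 'a \<Rightarrow> real" where
  "bump z0 r z = cutoff (r\<^sup>2 - (z - z0) \<bullet> (z - z0))"

lemma bump_smooth_on: "smooth_on UNIV (bump z0 r)"
proof -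
  have "(\<lambda>z. r\<^sup>2 - (z - z0) \<bullet> (z - z0)) = (\<lambda>z. (r\<^sup>2 - z0 \<bullet> z0) + ((-1) * (z \<bullet> z) + 2 * (z \<bullet> z0)))"
    by (simp add: fun_eq_iff inner_diff_left inner_diff_right inner_commute)
  then have "(\<lambda>z. r\<^sup>2 - (z - z0) \<bullet> (z - z0)) \<in> smooth_class"
    by (simp only:) (intro smooth_class.add smooth_class.mult smooth_class.const
        smooth_class.inner_self smooth_class.linear[OF bounded_linear_inner_left])
  then show ?thesis
    unfolding bump_def[abs_def] by (intro smooth_class_smooth_on smooth_class.cutoff_deriv)
qed

lemma bump_nonzero_iff:
  assumes "r > 0"
  shows "bump z0 r z \<noteq> 0 \<longleftrightarrow> z \<in> ball z0 r"
proof -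
  have "bump z0 r z \<noteq> 0 \<longleftrightarrow> (dist z0 z)\<^sup>2 < r\<^sup>2"
    using cutoff_pos_iff[of "r\<^sup>2 - (z - z0) \<bullet> (z - z0)"] cutoff_nonneg[of "r\<^sup>2 - (z - z0) \<bullet> (z - z0)"]
    by (auto simp: bump_def dist_norm power2_norm_eq_inner norm_minus_commute)
  also have "\<dots> \<longleftrightarrow> dist z0 z < r"
  proof
    show "(dist z0 z)\<^sup>2 < r\<^sup>2 \<Longrightarrow> dist z0 z < r"
      using assms by (auto intro: power2_less_imp_less)
    show "dist z0 z < r \<Longrightarrow> (dist z0 z)\<^sup>2 < r\<^sup>2"
      by (rule power_strict_mono) auto
  qed
  finally show ?thesis by simp
qed

lemma bump_lower_bound:
  assumes "r > 0" "z \<in> ball z0 (r / 2)"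
  shows "cutoff (3 * r\<^sup>2 / 4) \<le> bump z0 r z"
  unfolding bump_def
proof (rule cutoff_mono)
  have "(dist z z0)\<^sup>2 \<le> (r / 2)\<^sup>2"
    using assms by (intro power_mono) (auto simp: dist_commute)
  then show "3 * r\<^sup>2 / 4 \<le> r\<^sup>2 - (z - z0) \<bullet> (z - z0)"
    by (simp add: dist_norm power2_norm_eq_inner power_divide)
qed (use assms in simp)

lemma test_fun_bump:
  assumes "r > 0" "cball z0 r \<subseteq> S"
  shows "test_fun S (bump z0 r)"
proof -
  have "{z. bump z0 r z \<noteq> 0} = ball z0 r"
    using bump_nonzero_iff[OF assms(1)] by blast
  then show ?thesis
    using assms bump_smooth_on by (simp add: test_fun_def closure_ball)
qed

lemma set_borel_measurable_mult:
  fixes f g :: "'b::euclidean_space \<Rightarrow> real"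
  assumes "set_borel_measurable lborel S f" "set_borel_measurable lborel S g"
  shows "set_borel_measurable lborel S (\<lambda>x. f x * g x)"
proof -
  have "(\<lambda>x. indicator S x *\<^sub>R (f x * g x)) = (\<lambda>x. (indicator S x *\<^sub>R f x) * (indicator S x *\<^sub>R g x))"
    by (auto simp: indicator_def fun_eq_iff)
  then show ?thesis
    using assms unfolding set_borel_measurable_def by simp
qed

lemma set_borel_measurable_inner:
  fixes f g :: "'b::euclidean_space \<Rightarrow> 'c::euclidean_space"
  assumes "set_borel_measurable lborel S f" "set_borel_measurable lborel S g"
  shows "set_borel_measurable lborel S (\<lambda>x. f x \<bullet> g x)"
proof -
  have "(\<lambda>x. indicator S x *\<^sub>R (f x \<bullet> g x)) = (\<lambda>x. (indicator S x *\<^sub>R f x) \<bullet> (indicator S x *\<^sub>R g x))"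
    by (auto simp: indicator_def fun_eq_iff)
  then show ?thesis
    using assms unfolding set_borel_measurable_def by (simp only:) (rule borel_measurable_inner)
qed

lemma set_borel_measurable_powr:
  fixes f :: "'b::euclidean_space \<Rightarrow> real"
  assumes "set_borel_measurable lborel S f"
  shows "set_borel_measurable lborel S (\<lambda>x. f x powr q)"
proof -
  have "(\<lambda>x. indicator S x *\<^sub>R (f x powr q)) = (\<lambda>x. (indicator S x *\<^sub>R f x) powr q)"
    by (auto simp: indicator_def fun_eq_iff)
  then show ?thesis
    using assms unfolding set_borel_measurable_def by (simp add: powr_real_measurable)
qed

lemma set_borel_measurable_subset:
  fixes f :: "'b::euclidean_space \<Rightarrow> 'c::euclidean_space"
  assumes "set_borel_measurable lborel S f" "B \<in> sets lborel" "B \<subseteq> S"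
  shows "set_borel_measurable lborel B f"
proof -
  have "(\<lambda>x. indicator B x *\<^sub>R f x) = (\<lambda>x. indicator B x *\<^sub>R (indicator S x *\<^sub>R f x))"
    using assms(3) by (auto simp: indicator_def fun_eq_iff)
  then show ?thesis
    using assms borel_measurable_scaleR[OF borel_measurable_indicator[OF assms(2)]]
    unfolding set_borel_measurable_def by (simp only:)
qed

lemma set_borel_measurable_continuous:
  fixes f :: "'b::euclidean_space \<Rightarrow> 'c::euclidean_space"
  assumes "continuous_on UNIV f" "S \<in> sets lborel"
  shows "set_borel_measurable lborel S f"
  using assms borel_measurable_continuous_onI[OF assms(1)]
  unfolding set_borel_measurable_def by simp

lemma set_borel_measurable_set_integrable:
  "set_integrable lborel S f \<Longrightarrow> set_borel_measurable lborel S f"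
  unfolding set_integrable_def set_borel_measurable_def by (rule borel_measurable_integrable)

lemma set_integrable_bounded:
  fixes f :: "'b::euclidean_space \<Rightarrow> real"
  assumes "set_borel_measurable lborel S f" "S \<in> sets lborel" "emeasure lborel S < \<infinity>"
    and "AE x in lborel. x \<in> S \<longrightarrow> \<bar>f x\<bar> \<le> M"
  shows "set_integrable lborel S f"
proof (rule set_integrable_bound[OF _ assms(1)])
  show "set_integrable lborel S (\<lambda>x. M)"
    unfolding set_integrable_def using assms(2,3)
    by (intro integrable_scaleR_left integrable_real_indicator)
  show "AE x in lborel. x \<in> S \<longrightarrow> norm (f x) \<le> norm M"
    using assms(4) by eventually_elim auto
qed

lemma set_integrable_continuous:
  fixes f :: "'b::euclidean_space \<Rightarrow> 'c::euclidean_space"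
  assumes "continuous_on UNIV f" "S \<in> sets lborel" "bounded S"
  shows "set_integrable lborel S f"
proof -
  have "set_integrable lborel (closure S) f"
    unfolding set_integrable_def
    using assms by (intro borel_integrable_compact) (auto intro: continuous_on_subset compact_closure)
  then show ?thesis
    by (rule set_integrable_subset) (use assms closure_subset in auto)
qed

lemma L2_on_continuous:
  fixes f :: "'b::euclidean_space \<Rightarrow> real"
  assumes "continuous_on UNIV f" "S \<in> sets lborel" "bounded S"
  shows "L2_on S f"
  unfolding L2_on_def
  using assms by (auto intro!: set_borel_measurable_continuous set_integrable_continuous continuous_intros)

lemma L2v_on_continuous:
  fixes f :: "'b::euclidean_space \<Rightarrow> 'c::euclidean_space"
  assumes "continuous_on UNIV f" "S \<in> sets lborel" "bounded S"
  shows "L2v_on S f"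
  unfolding L2v_on_def
  using assms by (auto intro!: set_borel_measurable_continuous set_integrable_continuous continuous_intros)

lemma set_integrable_L2_mult:
  fixes f g :: "'b::euclidean_space \<Rightarrow> real"
  assumes "L2_on S f" "L2_on S g"
  shows "set_integrable lborel S (\<lambda>x. f x * g x)"
proof (rule set_integrable_bound)
  show "set_integrable lborel S (\<lambda>x. (f x)\<^sup>2 + (g x)\<^sup>2)"
    using assms unfolding L2_on_def by (intro set_integral_add) auto
  show "set_borel_measurable lborel S (\<lambda>x. f x * g x)"
    using assms unfolding L2_on_def by (intro set_borel_measurable_mult) auto
  have "\<bar>s * t\<bar> \<le> s\<^sup>2 + t\<^sup>2" for s t :: real
  proof -
    have "2 * (\<bar>s\<bar> * \<bar>t\<bar>) \<le> s\<^sup>2 + t\<^sup>2"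
      using sum_squares_bound[of "\<bar>s\<bar>" "\<bar>t\<bar>"] by (simp add: mult.assoc)
    then show ?thesis
      unfolding abs_mult using zero_le_mult_iff[of "\<bar>s\<bar>" "\<bar>t\<bar>"] by linarith
  qed
  then show "AE x in lborel. x \<in> S \<longrightarrow> norm (f x * g x) \<le> norm ((f x)\<^sup>2 + (g x)\<^sup>2)"
    by (intro AE_I2) auto
qed

lemma set_integrable_L2v_inner:
  fixes f g :: "'b::euclidean_space \<Rightarrow> 'c::euclidean_space"
  assumes "L2v_on S f" "L2v_on S g"
  shows "set_integrable lborel S (\<lambda>x. f x \<bullet> g x)"
proof (rule set_integrable_bound)
  show "set_integrable lborel S (\<lambda>x. (norm (f x))\<^sup>2 + (norm (g x))\<^sup>2)"
    using assms unfolding L2v_on_def by (intro set_integral_add) auto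
  show "set_borel_measurable lborel S (\<lambda>x. f x \<bullet> g x)"
    using assms unfolding L2v_on_def by (intro set_borel_measurable_inner) auto
  have "\<bar>s \<bullet> t\<bar> \<le> (norm s)\<^sup>2 + (norm t)\<^sup>2" for s t :: 'c
  proof -
    have "2 * (norm s * norm t) \<le> (norm s)\<^sup>2 + (norm t)\<^sup>2"
      using sum_squares_bound[of "norm s" "norm t"] by (simp add: mult.assoc)
    then show ?thesis
      using Cauchy_Schwarz_ineq2[of s t] zero_le_mult_iff[of "norm s" "norm t"] by linarith
  qed
  then show "AE x in lborel. x \<in> S \<longrightarrow> norm (f x \<bullet> g x) \<le> norm ((norm (f x))\<^sup>2 + (norm (g x))\<^sup>2)"
    by (intro AE_I2) auto
qed

lemma set_integrable_L2_diff_square: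
  fixes f g :: "'b::euclidean_space \<Rightarrow> real"
  assumes "L2_on S f" "L2_on S g"
  shows "set_integrable lborel S (\<lambda>x. (f x - g x)\<^sup>2)"
proof -
  have "set_integrable lborel S (\<lambda>x. (f x)\<^sup>2 - 2 * (f x * g x) + (g x)\<^sup>2)"
    using assms set_integrable_L2_mult[OF assms] unfolding L2_on_def
    by (intro set_integral_add set_integral_diff set_integrable_mult_right) auto
  moreover have "(\<lambda>x. (f x - g x)\<^sup>2) = (\<lambda>x. (f x)\<^sup>2 - 2 * (f x * g x) + (g x)\<^sup>2)"
    by (simp add: fun_eq_iff power2_diff)
  ultimately show ?thesis
    by simp
qed

lemma set_integral_nonneg:
  fixes f :: "'b \<Rightarrow> real"
  shows "(\<And>x. x \<in> A \<Longrightarrow> 0 \<le> f x) \<Longrightarrow> 0 \<le> (LINT x:A|M. f x)"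
  unfolding set_lebesgue_integral_def by (rule Bochner_Integration.integral_nonneg) (simp add: indicator_def)

section \<open>Integral bounds on large powers\<close>

text \<open>Where u exceeds 1 + 2\<epsilon>, either U exceeds 1 + \<epsilon> or U is \<epsilon>-far from u; Markov's
  inequality for U^q and for the squared error bounds both sets.\<close>
lemma emeasure_exceeding_le:
  fixes U u :: "'b::euclidean_space \<Rightarrow> real"
  assumes S: "S \<in> sets lborel" and B: "B \<in> sets lborel" "B \<subseteq> S"
    and U_powr: "set_integrable lborel B (\<lambda>z. U z powr q)"
    and diff: "set_integrable lborel S (\<lambda>z. (U z - u z)\<^sup>2)"
    and q: "q > 0" and \<epsilon>: "\<epsilon> > 0"
  shows "emeasure lborel {z\<in>B. 1 + 2 * \<epsilon> < u z}
    \<le> ennreal ((LINT z:B|lborel. U z powr q) / (1 + \<epsilon>) powr q + (LINT z:S|lborel. (U z - u z)\<^sup>2) / \<epsilon>\<^sup>2)"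
proof -
  define X where "X = {z\<in>B. (1 + \<epsilon>) powr q \<le> U z powr q}"
  define Y where "Y = {z\<in>S. \<epsilon>\<^sup>2 \<le> (U z - u z)\<^sup>2}"
  have "{z\<in>B. 1 + 2 * \<epsilon> < u z} \<subseteq> X \<union> Y"
  proof
    fix z assume z: "z \<in> {z\<in>B. 1 + 2 * \<epsilon> < u z}"
    show "z \<in> X \<union> Y"
    proof (cases "1 + \<epsilon> \<le> U z")
      case True
      then have "(1 + \<epsilon>) powr q \<le> U z powr q"
        using \<epsilon> q by (intro powr_mono2) auto
      then show ?thesis using z by (simp add: X_def)
    next
      case False
      then have "\<epsilon>\<^sup>2 \<le> (u z - U z)\<^sup>2"
        using z \<epsilon> by (intro power_mono) auto
      then show ?thesis using z B by (auto simp: Y_def power2_commute)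
    qed
  qed
  moreover have X: "X \<in> sets lborel" and Y: "Y \<in> sets lborel"
    using set_borel_measurable_sets[OF set_borel_measurable_set_integrable[OF U_powr], of "{_..}"]
      set_borel_measurable_sets[OF set_borel_measurable_set_integrable[OF diff], of "{_..}"] B S
    by (auto simp: X_def Y_def vimage_def Int_def conj_commute)
  ultimately have "emeasure lborel {z\<in>B. 1 + 2 * \<epsilon> < u z} \<le> emeasure lborel X + emeasure lborel Y"
    by (meson emeasure_mono emeasure_subadditive order_trans sets.Un)
  also have "\<dots> \<le> ennreal (1 / (1 + \<epsilon>) powr q * (LINT z:B|lborel. U z powr q))
      + ennreal (1 / \<epsilon>\<^sup>2 * (LINT z:S|lborel. (U z - u z)\<^sup>2))"
    unfolding X_def Y_def using \<epsilon>
    by (intro add_mono integral_Markov_inequality'[OF U_powr B(1)] integral_Markov_inequality'[OF diff S])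
      (auto intro!: AE_I2)
  also have "\<dots> = ennreal ((LINT z:B|lborel. U z powr q) / (1 + \<epsilon>) powr q + (LINT z:S|lborel. (U z - u z)\<^sup>2) / \<epsilon>\<^sup>2)"
    by (simp add: ennreal_plus set_integral_nonneg)
  finally show ?thesis .
qed

lemma powr_tendsto_at_top:
  fixes c :: real
  assumes "c > 1" "filterlim p at_top F"
  shows "filterlim (\<lambda>k. c powr p k) at_top F"
proof -
  have "filterlim (\<lambda>k. exp (p k * ln c)) at_top F"
    using assms
    by (intro filterlim_compose[OF exp_at_top] filterlim_at_top_mult_tendsto_pos[OF tendsto_const]) auto
  then show ?thesis
    using assms(1) by (simp add: powr_def)
qed

lemma AE_le_if_AE_le_add:
  fixes f :: "'b \<Rightarrow> real"
  assumes "\<And>\<epsilon>. \<epsilon> > 0 \<Longrightarrow> AE x in M. P x \<longrightarrow> f x \<le> c + \<epsilon>"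
  shows "AE x in M. P x \<longrightarrow> f x \<le> c"
proof -
  have "AE x in M. \<forall>n. P x \<longrightarrow> f x \<le> c + inverse (Suc n)"
    unfolding AE_all_countable using assms by simp
  then show ?thesis
  proof eventually_elim
    case (elim x)
    show ?case
    proof
      assume "P x"
      show "f x \<le> c"
      proof (rule field_le_epsilon)
        fix \<epsilon> :: real assume "\<epsilon> > 0"
        then obtain n where "inverse (Suc n) < \<epsilon>"
          using reals_Archimedean by blast
        moreover have "f x \<le> c + inverse (Suc n)"
          using elim \<open>P x\<close> by blast
        ultimately show "f x \<le> c + \<epsilon>"
          by linarith
      qed
    qed
  qed
qed

lemma AE_le_1_if_powr_integrals_bounded:
  fixes U :: "nat \<Rightarrow> 'b::euclidean_space \<Rightarrow> real" and u :: "'b \<Rightarrow> real"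
  assumes S: "S \<in> sets lborel" and B: "B \<in> sets lborel" "B \<subseteq> S"
    and u: "set_borel_measurable lborel S u"
    and U_powr: "\<And>k. set_integrable lborel B (\<lambda>z. U k z powr p k)"
    and bounded: "\<And>k. (LINT z:B|lborel. U k z powr p k) \<le> C"
    and diff: "\<And>k. set_integrable lborel S (\<lambda>z. (U k z - u z)\<^sup>2)"
    and conv: "(\<lambda>k. LINT z:S|lborel. (U k z - u z)\<^sup>2) \<longlonglongrightarrow> 0"
    and p: "filterlim p at_top sequentially" "\<And>k. p k > 0"
  shows "AE z in lborel. z \<in> B \<longrightarrow> u z \<le> 1"
proof (rule AE_le_if_AE_le_add)
  fix \<epsilon> :: real assume "\<epsilon> > 0"
  then have \<epsilon>: "\<epsilon> / 2 > 0"
    by simp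
  define s where "s k = C / (1 + \<epsilon> / 2) powr p k + (LINT z:S|lborel. (U k z - u z)\<^sup>2) / (\<epsilon> / 2)\<^sup>2" for k
  have bound: "emeasure lborel {z\<in>B. 1 + 2 * (\<epsilon> / 2) < u z} \<le> ennreal (s k)" for k
  proof -
    have "(LINT z:B|lborel. U k z powr p k) / (1 + \<epsilon> / 2) powr p k \<le> C / (1 + \<epsilon> / 2) powr p k"
      using bounded \<epsilon> by (simp add: divide_right_mono)
    then show ?thesis
      using emeasure_exceeding_le[OF S B U_powr diff p(2) \<epsilon>] unfolding s_def
      by (meson add_right_mono ennreal_leI order_trans)
  qed
  have "s \<longlonglongrightarrow> 0 + 0 / (\<epsilon> / 2)\<^sup>2"
    unfolding s_def using \<epsilon>
    by (intro tendsto_add tendsto_divide conv tendsto_divide_0[OF tendsto_const]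
        filterlim_at_top_imp_at_infinity powr_tendsto_at_top p(1)) auto
  then have "(\<lambda>k. ennreal (s k)) \<longlonglongrightarrow> ennreal 0"
    by (intro tendsto_ennrealI) simp
  then have "emeasure lborel {z\<in>B. 1 + 2 * (\<epsilon> / 2) < u z} \<le> ennreal 0"
    by (rule LIMSEQ_le_const) (use bound in auto)
  moreover have "{z\<in>B. 1 + 2 * (\<epsilon> / 2) < u z} \<in> sets lborel"
    using set_borel_measurable_sets[OF set_borel_measurable_subset[OF u B(1,2)] _ B(1), of "{1 + 2 * (\<epsilon> / 2)<..}"]
    by (simp add: vimage_def Int_def conj_commute)
  ultimately have "{z\<in>B. 1 + 2 * (\<epsilon> / 2) < u z} \<in> null_sets lborel"
    by (simp add: null_sets_def)
  then show "AE z in lborel. z \<in> B \<longrightarrow> u z \<le> 1 + \<epsilon>"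
    by (rule AE_I') auto
qed

section \<open>Smooth boundaries are null sets\<close>

lemma zeros_on_line_eq:
  fixes \<rho> :: "'a::real_normed_vector \<Rightarrow> real"
  assumes V: "convex V"
    and der: "\<And>x. x \<in> V \<Longrightarrow> (\<rho> has_derivative D x) (at x)"
    and nonzero: "\<And>x. x \<in> V \<Longrightarrow> D x v \<noteq> 0"
    and a: "a \<in> V" "a + c *\<^sub>R v \<in> V" "\<rho> a = 0" "\<rho> (a + c *\<^sub>R v) = 0"
  shows "c = 0"
proof (rule ccontr)
  assume c: "c \<noteq> 0"
  define h where "h t = \<rho> (a + t *\<^sub>R v)" for t
  define lo where "lo = min 0 c"
  define hi where "hi = max 0 c"
  have lo_hi: "lo < hi" "h lo = 0" "h hi = 0"
    using c a by (auto simp: lo_def hi_def h_def min_def max_def)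
  have inV: "a + t *\<^sub>R v \<in> V" if "t \<in> {lo..hi}" for t
  proof -
    have "0 \<le> t / c \<and> t / c \<le> 1"
      using that c by (cases "c > 0") (auto simp: lo_def hi_def field_simps)
    then have "(1 - t / c) *\<^sub>R a + (t / c) *\<^sub>R (a + c *\<^sub>R v) \<in> V"
      using convexD_alt[OF V a(1,2)] by blast
    moreover have "(1 - t / c) *\<^sub>R a + (t / c) *\<^sub>R (a + c *\<^sub>R v) = a + t *\<^sub>R v"
      using c by (simp add: algebra_simps)
    ultimately show ?thesis by simp
  qed
  have h_der: "(h has_derivative (\<lambda>s. D (a + t *\<^sub>R v) (s *\<^sub>R v))) (at t)" if "t \<in> {lo..hi}" for t
  proof -
    have "((\<lambda>t. a + t *\<^sub>R v) has_derivative (\<lambda>s. s *\<^sub>R v)) (at t)"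
      by (auto intro!: derivative_eq_intros)
    from has_derivative_compose[OF this der[OF inV[OF that]]] show ?thesis
      unfolding h_def[abs_def] .
  qed
  then have "continuous_on {lo..hi} h"
    by (intro continuous_at_imp_continuous_on ballI has_derivative_continuous) auto
  then obtain t where "lo < t" "t < hi" "(\<lambda>s. D (a + t *\<^sub>R v) (s *\<^sub>R v)) = (\<lambda>s. 0)"
    using Rolle_deriv[OF lo_hi(1) _ _ h_der] lo_hi by auto
  then have "D (a + t *\<^sub>R v) (1 *\<^sub>R v) = 0" and "t \<in> {lo..hi}"
    by (metis, auto)
  with nonzero[OF inV] show False
    by auto
qed

lemma translate_sets_lborel: "Z \<in> sets lborel \<Longrightarrow> {x. x - w \<in> Z} \<in> sets lborel"
  for Z :: "'a::euclidean_space set"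
  using measurable_sets[of "\<lambda>x. x - w" borel borel Z]
  by (simp add: vimage_def borel_measurable_continuous_onI continuous_intros)

lemma emeasure_translate_lborel:
  fixes Z :: "'a::euclidean_space set"
  assumes "Z \<in> sets lborel"
  shows "emeasure lborel {x. x - w \<in> Z} = emeasure lborel Z"
proof -
  have "emeasure lborel Z = emeasure (distr lborel borel ((+) (- w))) Z"
    by (simp add: lborel_distr_plus)
  also have "\<dots> = emeasure lborel {x. x - w \<in> Z}"
    using assms by (subst emeasure_distr) (auto simp: vimage_def)
  finally show ?thesis ..
qed

text \<open>Infinitely many disjoint translates of Z, all of the same measure, fit into a set of
  finite measure.\<close>
lemma null_sets_if_disjoint_translates:
  fixes Z W :: "'a::euclidean_space set" and w :: "nat \<Rightarrow> 'a"
  assumes Z: "Z \<in> sets lborel" and W: "bounded W"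
    and translates_in: "\<And>n. {x. x - w n \<in> Z} \<subseteq> W"
    and disjoint: "disjoint_family (\<lambda>n. {x. x - w n \<in> Z})"
  shows "Z \<in> null_sets lborel"
proof -
  define A where "A n = {x. x - w n \<in> Z}" for n
  have A_sets: "A n \<in> sets lborel" and A_measure: "emeasure lborel (A n) = emeasure lborel Z" for n
    using translate_sets_lborel[OF Z] emeasure_translate_lborel[OF Z] by (simp_all add: A_def)
  have W_finite: "closure W \<in> fmeasurable lborel"
    using W emeasure_bounded_finite[of "closure W"] by (simp add: fmeasurable_def bounded_closure)
  have "emeasure lborel Z = emeasure lborel (A 0)"
    by (simp add: A_measure)
  also have "\<dots> \<le> emeasure lborel (closure W)"
    using translates_in[of 0] closure_subset[of W] by (intro emeasure_mono) (auto simp: A_def)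
  also have "\<dots> < \<infinity>"
    using W_finite by (simp add: fmeasurable_def)
  finally have Z_finite: "emeasure lborel Z \<noteq> \<infinity>"
    by simp
  have bound: "real N * measure lborel Z \<le> measure lborel (closure W)" for N
  proof -
    have "real N * measure lborel Z = measure lborel (\<Union>n<N. A n)"
      using disjoint A_sets A_measure Z_finite
      by (subst measure_finite_Union) (auto simp: A_def disjoint_family_on_def measure_def)
    also have "\<dots> \<le> measure lborel (closure W)"
      using translates_in closure_subset[of W] A_sets W_finite
      by (intro measure_mono_fmeasurable) (auto simp: A_def)
    finally show ?thesis .
  qed
  have "measure lborel Z = 0"
  proof (rule ccontr)
    assume "measure lborel Z \<noteq> 0"
    then have "measure lborel Z > 0"
      using measure_nonneg[of lborel Z] by linarith
    then obtain N where "measure lborel (closure W) < real N * measure lborel Z"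
      using reals_Archimedean3 by blast
    with bound[of N] show False
      by simp
  qed
  then show ?thesis
    using Z Z_finite by (simp add: null_sets_def emeasure_eq_ennreal_measure)
qed

lemma partial_derivative_nonzero_near:
  fixes \<rho> :: "'a::euclidean_space \<Rightarrow> real"
  assumes "smooth_on U \<rho>" "open U" "x0 \<in> U" "grad \<rho> x0 \<noteq> 0"
  obtains i \<delta> where "i \<in> Basis" "\<delta> > 0" "ball x0 \<delta> \<subseteq> U"
    "\<And>y. y \<in> ball x0 \<delta> \<Longrightarrow> frechet_derivative \<rho> (at y) i \<noteq> 0"
proof -
  obtain i where i: "i \<in> Basis" "frechet_derivative \<rho> (at x0) i \<noteq> 0"
    using assms(4) unfolding grad_def by (metis (no_types, lifting) scale_eq_0_iff sum.neutral)
  have "continuous_on U (\<lambda>y. frechet_derivative \<rho> (at y) i)"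
    using assms(1) by (intro smooth_on_continuous_on smooth_on_directional_derivative)
  then have "open ((\<lambda>y. frechet_derivative \<rho> (at y) i) -` (- {0}) \<inter> U)"
    using continuous_on_open_vimage[OF assms(2)] open_Compl[OF closed_singleton] by blast
  then have "open {y\<in>U. frechet_derivative \<rho> (at y) i \<noteq> 0}"
    by (simp add: vimage_def Int_def conj_commute)
  then obtain \<delta> where "\<delta> > 0" "ball x0 \<delta> \<subseteq> {y\<in>U. frechet_derivative \<rho> (at y) i \<noteq> 0}"
    using assms(3) i(2) open_contains_ball by blast
  with i that show ?thesis
    by blast
qed

lemma defining_function_zero_on_frontier:
  fixes \<rho> :: "'a::euclidean_space \<Rightarrow> real"
  assumes "open O0" "open U" "continuous_on U \<rho>" "O0 \<inter> U = {x\<in>U. \<rho> x < 0}"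
    and "x \<in> frontier O0" "x \<in> U"
  shows "\<rho> x = 0"
proof (rule ccontr)
  assume "\<rho> x \<noteq> 0"
  moreover have "x \<notin> O0"
    using assms(1,5) by (simp add: frontier_def interior_open)
  then have "\<not> \<rho> x < 0"
    using assms(4,6) by blast
  ultimately have "x \<in> \<rho> -` {0<..} \<inter> U"
    using assms(6) by simp
  moreover have "open (\<rho> -` {0<..} \<inter> U)"
    using continuous_on_open_vimage[OF assms(2), THEN iffD1, OF assms(3), rule_format, OF open_greaterThan] .
  moreover have "(\<rho> -` {0<..} \<inter> U) \<inter> O0 = {}"
    using assms(4) by (simp add: set_eq_iff) (meson IntI less_asym)
  ultimately have "x \<notin> closure O0"
    using open_Int_closure_eq_empty by blast
  then show False
    using assms(5) by (simp add: frontier_def)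
qed

text \<open>Each line in direction v meets the zero set of \<rho> at most once, so Z is disjoint from
  its small translates in direction v.\<close>
lemma zero_set_null_if_partial_nonzero:
  fixes \<rho> :: "'a::euclidean_space \<Rightarrow> real"
  assumes \<delta>: "\<delta> > 0" and v: "norm v = 1"
    and der: "\<And>y. y \<in> ball x0 \<delta> \<Longrightarrow> (\<rho> has_derivative D y) (at y)"
    and nonzero: "\<And>y. y \<in> ball x0 \<delta> \<Longrightarrow> D y v \<noteq> 0"
    and Z: "Z \<in> sets lborel" "Z \<subseteq> ball x0 (\<delta> / 2)" "\<And>z. z \<in> Z \<Longrightarrow> \<rho> z = 0"
  shows "Z \<in> null_sets lborel"
proof -
  define w where "w n = (\<delta> / (2 * Suc n)) *\<^sub>R v" for n
  show ?thesis
  proof (rule null_sets_if_disjoint_translates[OF Z(1) bounded_ball])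
    show "{x. x - w n \<in> Z} \<subseteq> ball x0 \<delta>" for n
    proof
      fix x assume "x \<in> {x. x - w n \<in> Z}"
      then have "dist x0 (x - w n) < \<delta> / 2"
        using Z(2) by auto
      moreover have "norm (w n) \<le> \<delta> / 2"
        using \<delta> v by (simp add: w_def field_simps)
      ultimately show "x \<in> ball x0 \<delta>"
        using norm_triangle_ineq4[of "x0 - (x - w n)" "w n"] by (simp add: dist_norm algebra_simps)
    qed
    show "disjoint_family (\<lambda>n. {x. x - w n \<in> Z})"
    proof (unfold disjoint_family_on_def, intro ballI impI equalityI subsetI)
      fix m n x assume "m \<noteq> n" and x: "x \<in> {x. x - w m \<in> Z} \<inter> {x. x - w n \<in> Z}"
      have eq: "x - w m + (\<delta> / (2 * Suc m) - \<delta> / (2 * Suc n)) *\<^sub>R v = x - w n"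
        by (simp add: w_def algebra_simps)
      have "x - w m \<in> Z" "x - w n \<in> Z"
        using x by auto
      moreover have "Z \<subseteq> ball x0 \<delta>"
        using Z(2) \<delta> subset_ball[of "\<delta> / 2" \<delta> x0] by simp
      ultimately have "x - w m \<in> ball x0 \<delta>" "x - w n \<in> ball x0 \<delta>" "\<rho> (x - w m) = 0" "\<rho> (x - w n) = 0"
        using Z(3) by blast+
      then have "\<delta> / (2 * Suc m) - \<delta> / (2 * Suc n) = 0"
        using zeros_on_line_eq[where a = "x - w m" and c = "\<delta> / (2 * Suc m) - \<delta> / (2 * Suc n)",
            OF convex_ball der nonzero, unfolded eq]
        by blast
      with \<open>m \<noteq> n\<close> \<delta> show "x \<in> {}"
        by (simp del: of_nat_Suc)
    qed simp
  qed
qed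

lemma smooth_boundary_locally_null:
  fixes O0 :: "'a::euclidean_space set"
  assumes "open O0" "smooth_boundary O0" "x0 \<in> frontier O0"
  shows "\<exists>e>0. AE y in lborel. y \<in> ball x0 e \<longrightarrow> y \<notin> frontier O0"
proof -
  obtain U \<rho> where U: "open U" "x0 \<in> U" "smooth_on U \<rho>" "\<forall>x\<in>U. grad \<rho> x \<noteq> 0"
    "O0 \<inter> U = {x\<in>U. \<rho> x < 0}"
    using assms unfolding smooth_boundary_def by blast
  obtain i \<delta> where i: "i \<in> Basis" "\<delta> > 0" "ball x0 \<delta> \<subseteq> U"
    "\<And>y. y \<in> ball x0 \<delta> \<Longrightarrow> frechet_derivative \<rho> (at y) i \<noteq> 0"
    using partial_derivative_nonzero_near[OF U(3,1,2)] U(2,4) by blast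
  have "frontier O0 \<inter> ball x0 (\<delta> / 2) \<in> null_sets lborel"
  proof (rule zero_set_null_if_partial_nonzero[where D="\<lambda>y. frechet_derivative \<rho> (at y)",
        OF i(2) norm_Basis[OF i(1)] _ i(4)])
    show "(\<rho> has_derivative frechet_derivative \<rho> (at y)) (at y)" if "y \<in> ball x0 \<delta>" for y
      using smooth_on_differentiable[OF U(3)] that i(3) frechet_derivative_works by blast
    show "\<rho> z = 0" if "z \<in> frontier O0 \<inter> ball x0 (\<delta> / 2)" for z
    proof -
      have "z \<in> U"
        using that i(2,3) by auto
      with that show ?thesis
        using defining_function_zero_on_frontier[OF assms(1) U(1) smooth_on_continuous_on[OF U(3)] U(5)]
        by simp
    qed
  qed simp_all
  from AE_not_in[OF this] have "AE y in lborel. y \<in> ball x0 (\<delta> / 2) \<longrightarrow> y \<notin> frontier O0"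
    by eventually_elim blast
  moreover have "\<delta> / 2 > 0"
    using i(2) by simp
  ultimately show ?thesis
    by blast
qed

lemma AE_if_locally_AE:
  fixes V :: "'a::euclidean_space set"
  assumes "\<And>x. x \<in> V \<Longrightarrow> \<exists>e>0. AE y in lborel. y \<in> ball x e \<longrightarrow> P y"
  shows "AE y in lborel. y \<in> V \<longrightarrow> P y"
proof -
  define \<F> where "\<F> = {ball x e | x e. e > 0 \<and> (AE y in lborel. y \<in> ball x e \<longrightarrow> P y)}"
  have "\<And>B. B \<in> \<F> \<Longrightarrow> open B"
    by (auto simp: \<F>_def)
  then obtain \<F>' where \<F>': "\<F>' \<subseteq> \<F>" "countable \<F>'" "\<Union>\<F>' = \<Union>\<F>"
    using Lindelof by blast
  have cover: "V \<subseteq> \<Union>\<F>'"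
  proof
    fix x assume "x \<in> V"
    then obtain e where "e > 0" "AE y in lborel. y \<in> ball x e \<longrightarrow> P y"
      using assms by blast
    then have "ball x e \<in> \<F>" "x \<in> ball x e"
      by (auto simp: \<F>_def)
    then show "x \<in> \<Union>\<F>'"
      using \<F>'(3) by blast
  qed
  have "AE y in lborel. \<forall>B\<in>\<F>'. y \<in> B \<longrightarrow> P y"
    using \<F>'(1,2) by (subst AE_ball_countable) (auto simp: \<F>_def)
  then show ?thesis
    by eventually_elim (use cover in blast)
qed

lemma frontier_null_if_smooth_boundary:
  fixes O0 :: "'a::euclidean_space set"
  assumes "open O0" "smooth_boundary O0"
  shows "frontier O0 \<in> null_sets lborel"
proof -
  have "AE y in lborel. y \<in> frontier O0 \<longrightarrow> y \<notin> frontier O0"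
    using smooth_boundary_locally_null[OF assms] by (rule AE_if_locally_AE)
  then show ?thesis
    by (simp add: AE_iff_null_sets)
qed

section \<open>Product measure and the space-time cylinder\<close>

lemma AE_lborel_snd:
  fixes P :: "'b::euclidean_space \<Rightarrow> bool"
  assumes "AE x in lborel. P x"
  shows "AE z in (lborel :: ('a::euclidean_space \<times> 'b) measure). P (snd z)"
proof -
  obtain N where N: "{x. \<not> P x} \<subseteq> N" "emeasure lborel N = 0" "N \<in> sets lborel"
    using AE_E[OF assms] by auto
  have "UNIV \<times> N \<in> null_sets (lborel \<Otimes>\<^sub>M (lborel :: 'b measure))"
    using N(2,3) by (simp add: lborel.emeasure_pair_measure_Times null_sets_def)
  then have "UNIV \<times> N \<in> null_sets (lborel :: ('a \<times> 'b) measure)"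
    by (simp only: lborel_prod)
  then show ?thesis
    by (rule AE_I') (use N(1) in auto)
qed

lemma AE_lborel_prod_iterated:
  fixes Q :: "'a::euclidean_space \<times> 'b::euclidean_space \<Rightarrow> bool"
  assumes "AE z in lborel. Q z"
  shows "AE t in lborel. AE x in lborel. Q (t, x)"
proof -
  have "pair_sigma_finite (lborel :: 'a measure) (lborel :: 'b measure)"
    by (simp add: pair_sigma_finite_def sigma_finite_lborel)
  moreover have "AE z in (lborel :: 'a measure) \<Otimes>\<^sub>M (lborel :: 'b measure). Q z"
    using assms by (simp only: lborel_prod)
  ultimately show ?thesis
    by (rule pair_sigma_finite.AE_pair)
qed

lemma set_borel_measurable_snd:
  fixes f :: "'b::euclidean_space \<Rightarrow> real"
  assumes "set_borel_measurable lborel A f" "S \<in> sets lborel" "snd ` S \<subseteq> A"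
  shows "set_borel_measurable lborel S (\<lambda>z :: 'a::euclidean_space \<times> 'b. f (snd z))"
proof -
  have "(snd :: 'a \<times> 'b \<Rightarrow> 'b) \<in> measurable lborel lborel"
    using borel_measurable_continuous_onI[OF continuous_on_snd[OF continuous_on_id]]
    by (simp add: measurable_lborel1)
  then have meas: "(\<lambda>z. indicator A (snd z) *\<^sub>R f (snd z)) \<in> borel_measurable (lborel :: ('a \<times> 'b) measure)"
    using measurable_compose[of snd lborel lborel "\<lambda>x. indicator A x *\<^sub>R f x"] assms(1)
    unfolding set_borel_measurable_def by simp
  have "(\<lambda>z. indicator S z *\<^sub>R f (snd z)) = (\<lambda>z. indicator S z *\<^sub>R (indicator A (snd z) *\<^sub>R f (snd z)))"
    using assms(3) by (auto simp: fun_eq_iff indicator_def)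
  then show ?thesis
    unfolding set_borel_measurable_def
    by (simp only:) (rule borel_measurable_scaleR[OF borel_measurable_indicator[OF assms(2)] meas])
qed

lemma cyl_sets: "open \<Omega> \<Longrightarrow> cyl \<Omega> T \<in> sets lborel"
  by (simp add: cyl_def open_Times)

lemma bounded_cyl: "bounded \<Omega> \<Longrightarrow> bounded (cyl \<Omega> T)"
  by (simp add: cyl_def bounded_Times)

lemma emeasure_cyl_finite: "bounded \<Omega> \<Longrightarrow> emeasure lborel (cyl \<Omega> T) < \<infinity>"
  using emeasure_bounded_finite[OF bounded_cyl] by (simp add: less_top)

lemma cball_subset_cyl:
  assumes "t0 > 0" "cball x0 e \<subseteq> \<Omega>" "r \<le> e" "r \<le> t0 / 2"
  shows "cball (t0, x0) r \<subseteq> cyl \<Omega> (2 * t0)"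
proof
  fix z assume "z \<in> cball (t0, x0) r"
  then have "dist t0 (fst z) \<le> r" "dist x0 (snd z) \<le> r"
    using dist_fst_le[of "(t0, x0)" z] dist_snd_le[of "(t0, x0)" z] by auto
  then show "z \<in> cyl \<Omega> (2 * t0)"
    using assms by (auto simp: cyl_def mem_Times_iff dist_real_def abs_le_iff subset_eq)
qed

section \<open>Limits of large exponents\<close>

lemma set_integral_mult_le_superset:
  fixes f g :: "'b::euclidean_space \<Rightarrow> real"
  assumes B: "B \<in> sets lborel" "B \<subseteq> S"
    and f: "set_integrable lborel B f" and g: "set_integrable lborel S g"
    and le: "AE z in lborel. z \<in> B \<longrightarrow> c * f z \<le> g z"
    and nonneg: "AE z in lborel. z \<in> S - B \<longrightarrow> 0 \<le> g z"
  shows "c * (LINT z:B|lborel. f z) \<le> (LINT z:S|lborel. g z)"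
proof -
  have "c * (LINT z:B|lborel. f z) = integral\<^sup>L lborel (\<lambda>z. indicator B z *\<^sub>R (c * f z))"
    by (simp add: set_lebesgue_integral_def mult.left_commute)
  also have "\<dots> \<le> integral\<^sup>L lborel (\<lambda>z. indicator S z *\<^sub>R g z)"
  proof (rule integral_mono_AE)
    show "integrable lborel (\<lambda>z. indicator B z *\<^sub>R (c * f z))"
      using set_integrable_mult_right[OF f, of c] by (simp add: set_integrable_def)
    show "integrable lborel (\<lambda>z. indicator S z *\<^sub>R g z)"
      using g by (simp add: set_integrable_def)
    show "AE z in lborel. indicator B z *\<^sub>R (c * f z) \<le> indicator S z *\<^sub>R g z"
      using le nonneg by eventually_elim (use B in \<open>auto simp: indicator_def\<close>)
  qed
  also have "\<dots> = (LINT z:S|lborel. g z)"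
    by (simp add: set_lebesgue_integral_def)
  finally show ?thesis .
qed

lemma test_fun_L2:
  fixes \<psi> :: "real \<times> 'a::euclidean_space \<Rightarrow> real"
  assumes "test_fun S \<psi>" "S \<in> sets lborel" "bounded S"
  shows "L2_on S \<psi>" "L2v_on S (gradx \<psi>)"
  using assms smooth_on_continuous_on continuous_on_gradx
  by (auto simp: test_fun_def intro!: L2_on_continuous L2v_on_continuous)

text \<open>U k, GU k and DU k are the solution for the exponent p k, its spatial gradient and its time
  derivative; u, Gu and Du are their limits.\<close>
locale large_exponent_limit =
  fixes \<Omega> \<Omega>0 :: "'a::euclidean_space set"
    and a :: real and b u0 :: "'a \<Rightarrow> real"
    and p :: "nat \<Rightarrow> real"
    and U :: "nat \<Rightarrow> real \<Rightarrow> 'a \<Rightarrow> real" and GU :: "nat \<Rightarrow> real \<Rightarrow> 'a \<Rightarrow> 'a"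
    and DU :: "nat \<Rightarrow> real \<Rightarrow> 'a \<Rightarrow> real"
    and u :: "real \<Rightarrow> 'a \<Rightarrow> real" and Gu :: "real \<Rightarrow> 'a \<Rightarrow> 'a" and Du :: "real \<Rightarrow> 'a \<Rightarrow> real"
  assumes open_domain: "open \<Omega>" and bounded_domain: "bounded \<Omega>"
    and b_Linf: "Linfty_on \<Omega> b"
    and b_nonneg: "AE x in lborel. x \<in> \<Omega> \<longrightarrow> b x \<ge> 0"
    and Omega0: "open \<Omega>0" "smooth_boundary \<Omega>0"
    and b_pos: "\<And>\<Omega>'. open \<Omega>' \<Longrightarrow> compact (closure \<Omega>') \<Longrightarrow> closure \<Omega>' \<subseteq> \<Omega> - \<Omega>0 \<Longrightarrow>
                  \<exists>bl>0. AE x in lborel. x \<in> \<Omega>' \<longrightarrow> b x \<ge> bl"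
    and p_pos: "\<And>k. p k > 0"
    and p_lim: "filterlim p at_top sequentially"
    and sol: "\<And>k. global_solution \<Omega> a b (p k) u0 (U k) (GU k) (DU k)"
    and lim_u: "\<And>T. T > 0 \<Longrightarrow> L2H01 \<Omega> T u Gu \<and> time_deriv \<Omega> T u Du"
    and strong: "\<And>T. T > 0 \<Longrightarrow>
       (\<lambda>k. LINT z:cyl \<Omega> T|lborel. (U k (fst z) (snd z) - u (fst z) (snd z))\<^sup>2) \<longlonglongrightarrow> 0"
    and weak_u: "\<And>T. T > 0 \<Longrightarrow>
       weak_L2 (cyl \<Omega> T) (\<lambda>k z. U k (fst z) (snd z)) (\<lambda>z. u (fst z) (snd z))"
    and weak_grad: "\<And>T. T > 0 \<Longrightarrow>
       weak_L2v (cyl \<Omega> T) (\<lambda>k z. GU k (fst z) (snd z)) (\<lambda>z. Gu (fst z) (snd z))"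
    and weak_dt: "\<And>T. T > 0 \<Longrightarrow>
       weak_L2 (cyl \<Omega> T) (\<lambda>k z. DU k (fst z) (snd z)) (\<lambda>z. Du (fst z) (snd z))"
begin

lemma solution_on_cyl:
  assumes "T > 0"
  shows "L2_on (cyl \<Omega> T) (\<lambda>z. U k (fst z) (snd z))"
    and "L2v_on (cyl \<Omega> T) (\<lambda>z. GU k (fst z) (snd z))"
    and "L2_on (cyl \<Omega> T) (\<lambda>z. DU k (fst z) (snd z))"
    and "\<exists>M. AE z in lborel. z \<in> cyl \<Omega> T \<longrightarrow> \<bar>U k (fst z) (snd z)\<bar> \<le> M"
    and "AE z in lborel. z \<in> cyl \<Omega> T \<longrightarrow> 0 \<le> U k (fst z) (snd z)"
    and "test_fun (cyl \<Omega> T) \<psi> \<Longrightarrow>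
       (LINT z:cyl \<Omega> T|lborel. DU k (fst z) (snd z) * \<psi> z + GU k (fst z) (snd z) \<bullet> gradx \<psi> z)
       = (LINT z:cyl \<Omega> T|lborel. (a * U k (fst z) (snd z) - b (snd z) * U k (fst z) (snd z) powr p k) * \<psi> z)"
proof -
  have "AE z in lborel. z \<in> {0<..} \<times> \<Omega> \<longrightarrow> 0 \<le> U k (fst z) (snd z)"
    using sol[of k] unfolding global_solution_def by blast
  then show "AE z in lborel. z \<in> cyl \<Omega> T \<longrightarrow> 0 \<le> U k (fst z) (snd z)"
    by eventually_elim (auto simp: cyl_def)
qed (use sol[of k] assms in \<open>auto simp: global_solution_def L2H01_def time_deriv_def Linfty_on_def\<close>)

lemma b_bounded_nonneg: "\<exists>M. AE z in (lborel :: (real \<times> 'a) measure). snd z \<in> \<Omega> \<longrightarrow> 0 \<le> b (snd z) \<and> b (snd z) \<le> M"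
proof -
  obtain M where "AE x in lborel. x \<in> \<Omega> \<longrightarrow> \<bar>b x\<bar> \<le> M"
    using b_Linf unfolding Linfty_on_def by blast
  with b_nonneg have "AE x in lborel. x \<in> \<Omega> \<longrightarrow> 0 \<le> b x \<and> b x \<le> M"
    by eventually_elim auto
  then show ?thesis
    by (intro exI[of _ M] AE_lborel_snd)
qed

lemma bounded_mult_powr_integrable:
  assumes "T > 0" "B \<in> sets lborel" "B \<subseteq> cyl \<Omega> T"
    and "set_borel_measurable lborel B \<phi>" "AE z in lborel. z \<in> B \<longrightarrow> \<bar>\<phi> z\<bar> \<le> C"
  shows "set_integrable lborel B (\<lambda>z. \<phi> z * U k (fst z) (snd z) powr p k)"
proof -
  obtain M where M: "AE z in lborel. z \<in> cyl \<Omega> T \<longrightarrow> \<bar>U k (fst z) (snd z)\<bar> \<le> M"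
    using solution_on_cyl(4)[OF assms(1)] by blast
  have finite: "emeasure lborel B < \<infinity>"
    using emeasure_mono[OF assms(3) cyl_sets[OF open_domain]] emeasure_cyl_finite[OF bounded_domain]
    by (meson le_less_trans)
  have "set_borel_measurable lborel B (\<lambda>z. U k (fst z) (snd z))"
    using solution_on_cyl(1)[OF assms(1), of k] assms(2,3) unfolding L2_on_def
    by (blast intro: set_borel_measurable_subset)
  then have measurable: "set_borel_measurable lborel B (\<lambda>z. \<phi> z * U k (fst z) (snd z) powr p k)"
    using assms(4) by (intro set_borel_measurable_mult set_borel_measurable_powr)
  have "AE z in lborel. z \<in> B \<longrightarrow> \<bar>\<phi> z * U k (fst z) (snd z) powr p k\<bar> \<le> C * M powr p k"
    using M solution_on_cyl(5)[OF assms(1), of k] assms(5)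
  proof eventually_elim
    case (elim z)
    show ?case
    proof
      assume "z \<in> B"
      then have "0 \<le> U k (fst z) (snd z)" "U k (fst z) (snd z) \<le> M" "\<bar>\<phi> z\<bar> \<le> C"
        using elim assms(3) by auto
      then show "\<bar>\<phi> z * U k (fst z) (snd z) powr p k\<bar> \<le> C * M powr p k"
        using p_pos[of k] by (auto simp: abs_mult intro!: mult_mono powr_mono2)
    qed
  qed
  then show ?thesis
    by (rule set_integrable_bounded[OF measurable assms(2) finite])
qed

lemma powr_integrable:
  assumes "T > 0" "B \<in> sets lborel" "B \<subseteq> cyl \<Omega> T"
  shows "set_integrable lborel B (\<lambda>z. U k (fst z) (snd z) powr p k)"
  using bounded_mult_powr_integrable[OF assms, of "\<lambda>_. 1" 1 k] set_borel_measurable_continuous[OF _ assms(2), of "\<lambda>_. 1::real"]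
  by simp

lemma weighted_powr_integrable:
  assumes "T > 0" "B \<in> sets lborel" "B \<subseteq> cyl \<Omega> T" "continuous_on UNIV \<psi>" "\<And>z. \<bar>\<psi> z\<bar> \<le> 1"
  shows "set_integrable lborel B (\<lambda>z. b (snd z) * \<psi> z * U k (fst z) (snd z) powr p k)"
proof -
  have "snd ` B \<subseteq> \<Omega>"
    using assms(3) by (auto simp: cyl_def)
  then have "set_borel_measurable lborel B (\<lambda>z. b (snd z))"
    using b_Linf assms(2) unfolding Linfty_on_def by (blast intro: set_borel_measurable_snd)
  then have measurable: "set_borel_measurable lborel B (\<lambda>z. b (snd z) * \<psi> z)"
    using set_borel_measurable_continuous[OF assms(4,2)] by (rule set_borel_measurable_mult)
  obtain M where "AE z in (lborel :: (real \<times> 'a) measure). snd z \<in> \<Omega> \<longrightarrow> 0 \<le> b (snd z) \<and> b (snd z) \<le> M"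
    using b_bounded_nonneg by blast
  then have "AE z in lborel. z \<in> B \<longrightarrow> \<bar>b (snd z) * \<psi> z\<bar> \<le> M"
  proof eventually_elim
    case (elim z)
    show ?case
    proof
      assume "z \<in> B"
      then have "0 \<le> b (snd z)" "b (snd z) \<le> M"
        using elim assms(3) by (auto simp: cyl_def)
      then show "\<bar>b (snd z) * \<psi> z\<bar> \<le> M"
        using assms(5)[of z] mult_left_mono[of "\<bar>\<psi> z\<bar>" 1 "b (snd z)"] by (simp add: abs_mult)
    qed
  qed
  then show ?thesis
    by (rule bounded_mult_powr_integrable[OF assms(1-3) measurable])
qed

lemma weighted_powr_integral_eq:
  assumes T: "T > 0" and \<psi>: "test_fun (cyl \<Omega> T) \<psi>" "\<And>z. \<bar>\<psi> z\<bar> \<le> 1"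
  shows "(LINT z:cyl \<Omega> T|lborel. b (snd z) * \<psi> z * U k (fst z) (snd z) powr p k)
    = a * (LINT z:cyl \<Omega> T|lborel. U k (fst z) (snd z) * \<psi> z)
      - (LINT z:cyl \<Omega> T|lborel. DU k (fst z) (snd z) * \<psi> z)
      - (LINT z:cyl \<Omega> T|lborel. GU k (fst z) (snd z) \<bullet> gradx \<psi> z)"
proof -
  let ?S = "cyl \<Omega> T"
  have L2: "L2_on ?S \<psi>" "L2v_on ?S (gradx \<psi>)"
    using test_fun_L2[OF \<psi>(1) cyl_sets[OF open_domain] bounded_cyl[OF bounded_domain]] by auto
  have D: "set_integrable lborel ?S (\<lambda>z. DU k (fst z) (snd z) * \<psi> z)"
    using set_integrable_L2_mult[OF solution_on_cyl(3)[OF T] L2(1)] .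
  have G: "set_integrable lborel ?S (\<lambda>z. GU k (fst z) (snd z) \<bullet> gradx \<psi> z)"
    using set_integrable_L2v_inner[OF solution_on_cyl(2)[OF T] L2(2)] .
  have aU: "set_integrable lborel ?S (\<lambda>z. a * (U k (fst z) (snd z) * \<psi> z))"
    using set_integrable_L2_mult[OF solution_on_cyl(1)[OF T] L2(1)] by (rule set_integrable_mult_right)
  have bU: "set_integrable lborel ?S (\<lambda>z. b (snd z) * \<psi> z * U k (fst z) (snd z) powr p k)"
    using \<psi> by (intro weighted_powr_integrable[OF T cyl_sets[OF open_domain]])
      (auto simp: test_fun_def intro: smooth_on_continuous_on)
  have "(LINT z:?S|lborel. DU k (fst z) (snd z) * \<psi> z) + (LINT z:?S|lborel. GU k (fst z) (snd z) \<bullet> gradx \<psi> z)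
      = (LINT z:?S|lborel. DU k (fst z) (snd z) * \<psi> z + GU k (fst z) (snd z) \<bullet> gradx \<psi> z)"
    by (rule set_integral_add(2)[OF D G, symmetric])
  also have "\<dots> = (LINT z:?S|lborel. (a * U k (fst z) (snd z) - b (snd z) * U k (fst z) (snd z) powr p k) * \<psi> z)"
    by (rule solution_on_cyl(6)[OF T \<psi>(1)])
  also have "\<dots> = (LINT z:?S|lborel. a * (U k (fst z) (snd z) * \<psi> z) - b (snd z) * \<psi> z * U k (fst z) (snd z) powr p k)"
    by (simp add: algebra_simps)
  also have "\<dots> = a * (LINT z:?S|lborel. U k (fst z) (snd z) * \<psi> z)
      - (LINT z:?S|lborel. b (snd z) * \<psi> z * U k (fst z) (snd z) powr p k)"
    by (simp add: set_integral_diff(2)[OF aU bU] set_integral_mult_right)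
  finally show ?thesis
    by linarith
qed

lemma weighted_powr_integral_bounded:
  assumes T: "T > 0" and \<psi>: "test_fun (cyl \<Omega> T) \<psi>" "\<And>z. \<bar>\<psi> z\<bar> \<le> 1"
  shows "\<exists>K. \<forall>k. (LINT z:cyl \<Omega> T|lborel. b (snd z) * \<psi> z * U k (fst z) (snd z) powr p k) \<le> K"
proof -
  have L2: "L2_on (cyl \<Omega> T) \<psi>" "L2v_on (cyl \<Omega> T) (gradx \<psi>)"
    using test_fun_L2[OF \<psi>(1) cyl_sets[OF open_domain] bounded_cyl[OF bounded_domain]] by auto
  have "convergent (\<lambda>k. a * (LINT z:cyl \<Omega> T|lborel. U k (fst z) (snd z) * \<psi> z)
      - (LINT z:cyl \<Omega> T|lborel. DU k (fst z) (snd z) * \<psi> z)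
      - (LINT z:cyl \<Omega> T|lborel. GU k (fst z) (snd z) \<bullet> gradx \<psi> z))"
  proof (intro convergent_diff convergent_mult convergent_const)
    show "convergent (\<lambda>k. LINT z:cyl \<Omega> T|lborel. U k (fst z) (snd z) * \<psi> z)"
      using weak_u[OF T] L2(1) unfolding weak_L2_def convergent_def by blast
    show "convergent (\<lambda>k. LINT z:cyl \<Omega> T|lborel. DU k (fst z) (snd z) * \<psi> z)"
      using weak_dt[OF T] L2(1) unfolding weak_L2_def convergent_def by blast
    show "convergent (\<lambda>k. LINT z:cyl \<Omega> T|lborel. GU k (fst z) (snd z) \<bullet> gradx \<psi> z)"
      using weak_grad[OF T] L2(2) unfolding weak_L2v_def convergent_def by blast
  qed
  then have "Bseq (\<lambda>k. LINT z:cyl \<Omega> T|lborel. b (snd z) * \<psi> z * U k (fst z) (snd z) powr p k)"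
    unfolding weighted_powr_integral_eq[OF assms] by (rule convergent_imp_Bseq)
  then obtain K where "\<And>k. norm (LINT z:cyl \<Omega> T|lborel. b (snd z) * \<psi> z * U k (fst z) (snd z) powr p k) \<le> K"
    by (rule BseqE) blast
  then show ?thesis
    by (auto simp: abs_le_iff)
qed

lemma powr_integral_le_weighted:
  assumes T: "T > 0" and r: "r > 0" "cball z0 r \<subseteq> cyl \<Omega> T"
    and bl: "bl > 0" "AE z in lborel. z \<in> ball z0 (r / 2) \<longrightarrow> bl \<le> b (snd z)"
  shows "bl * cutoff (3 * r\<^sup>2 / 4) * (LINT z:ball z0 (r / 2)|lborel. U k (fst z) (snd z) powr p k)
    \<le> (LINT z:cyl \<Omega> T|lborel. b (snd z) * bump z0 r z * U k (fst z) (snd z) powr p k)"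
proof (rule set_integral_mult_le_superset)
  show B: "ball z0 (r / 2) \<in> sets lborel" "ball z0 (r / 2) \<subseteq> cyl \<Omega> T"
    using r by auto
  show "set_integrable lborel (ball z0 (r / 2)) (\<lambda>z. U k (fst z) (snd z) powr p k)"
    by (rule powr_integrable[OF T B])
  show "set_integrable lborel (cyl \<Omega> T) (\<lambda>z. b (snd z) * bump z0 r z * U k (fst z) (snd z) powr p k)"
    by (rule weighted_powr_integrable[OF T cyl_sets[OF open_domain] order_refl
          smooth_on_continuous_on[OF bump_smooth_on]]) (simp add: bump_def cutoff_nonneg cutoff_le_1)
  show "AE z in lborel. z \<in> ball z0 (r / 2) \<longrightarrow> bl * cutoff (3 * r\<^sup>2 / 4) * U k (fst z) (snd z) powr p k
      \<le> b (snd z) * bump z0 r z * U k (fst z) (snd z) powr p k"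
    using bl(2)
  proof eventually_elim
    case (elim z)
    show ?case
    proof
      assume "z \<in> ball z0 (r / 2)"
      then have "bl * cutoff (3 * r\<^sup>2 / 4) \<le> b (snd z) * bump z0 r z"
        using elim bl(1) bump_lower_bound[OF r(1)] by (intro mult_mono) (auto simp: cutoff_nonneg)
      then show "bl * cutoff (3 * r\<^sup>2 / 4) * U k (fst z) (snd z) powr p k
          \<le> b (snd z) * bump z0 r z * U k (fst z) (snd z) powr p k"
        by (rule mult_right_mono) simp
    qed
  qed
  obtain M where "AE z in (lborel :: (real \<times> 'a) measure). snd z \<in> \<Omega> \<longrightarrow> 0 \<le> b (snd z) \<and> b (snd z) \<le> M"
    using b_bounded_nonneg by blast
  then show "AE z in lborel. z \<in> cyl \<Omega> T - ball z0 (r / 2) \<longrightarrow> 0 \<le> b (snd z) * bump z0 r z * U k (fst z) (snd z) powr p k"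
    by eventually_elim (auto simp: cyl_def bump_def cutoff_nonneg)
qed

lemma powr_integral_bounded_near:
  assumes T: "T > 0" and r: "r > 0" "cball z0 r \<subseteq> cyl \<Omega> T"
    and bl: "bl > 0" "AE z in lborel. z \<in> ball z0 (r / 2) \<longrightarrow> bl \<le> b (snd z)"
  shows "\<exists>C. \<forall>k. (LINT z:ball z0 (r / 2)|lborel. U k (fst z) (snd z) powr p k) \<le> C"
proof -
  have "\<bar>bump z0 r z\<bar> \<le> 1" for z
    by (simp add: bump_def cutoff_nonneg cutoff_le_1)
  then obtain K where K: "\<And>k. (LINT z:cyl \<Omega> T|lborel. b (snd z) * bump z0 r z * U k (fst z) (snd z) powr p k) \<le> K"
    using weighted_powr_integral_bounded[OF T test_fun_bump[OF r]] by blast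
  have "cutoff (3 * r\<^sup>2 / 4) > 0"
    using r by (simp add: cutoff_pos_iff)
  with bl(1) have "(LINT z:ball z0 (r / 2)|lborel. U k (fst z) (snd z) powr p k) \<le> K / (bl * cutoff (3 * r\<^sup>2 / 4))" for k
    using order_trans[OF powr_integral_le_weighted[OF T r bl, of k] K[of k]]
    by (simp add: field_simps mult.assoc)
  then show ?thesis
    by blast
qed

lemma AE_le_1_near:
  assumes t0: "t0 > 0" and x0: "x0 \<in> \<Omega> - closure \<Omega>0"
  shows "\<exists>r>0. AE z in lborel. z \<in> ball (t0, x0) r \<longrightarrow> u (fst z) (snd z) \<le> 1"
proof -
  obtain e where e: "e > 0" "cball x0 e \<subseteq> \<Omega> - closure \<Omega>0"
    using x0 open_domain open_contains_cball[of "\<Omega> - closure \<Omega>0"] by blast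
  moreover have "closure (ball x0 e) \<subseteq> \<Omega> - \<Omega>0"
    using e closure_subset[of \<Omega>0] by (auto simp: closure_ball)
  ultimately obtain bl where bl: "bl > 0" "AE x in lborel. x \<in> ball x0 e \<longrightarrow> bl \<le> b x"
    using b_pos[of "ball x0 e"] by (auto simp: closure_ball)
  define r where "r = min e (t0 / 2)"
  define T where "T = 2 * t0"
  let ?S = "cyl \<Omega> T" and ?B = "ball (t0, x0) (r / 2)"
  have "cball x0 e \<subseteq> \<Omega>" "r \<le> e" "r \<le> t0 / 2"
    using e(2) by (auto simp: r_def)
  from cball_subset_cyl[OF t0 this] have r: "r > 0" "cball (t0, x0) r \<subseteq> ?S"
    using e(1) t0 by (simp_all add: r_def T_def)
  have T: "T > 0"
    using t0 by (simp add: T_def)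
  have "AE z in (lborel :: (real \<times> 'a) measure). z \<in> ?B \<longrightarrow> bl \<le> b (snd z)"
    using AE_lborel_snd[OF bl(2)]
  proof eventually_elim
    case (elim z)
    have "z \<in> ?B \<Longrightarrow> dist x0 (snd z) < e"
      using dist_snd_le[of "(t0, x0)" z] r(1) by (simp add: r_def)
    with elim show ?case
      by simp
  qed
  then obtain C where C: "\<And>k. (LINT z:?B|lborel. U k (fst z) (snd z) powr p k) \<le> C"
    using powr_integral_bounded_near[OF T r bl(1)] by blast
  have B: "?B \<in> sets lborel" "?B \<subseteq> ?S"
    using r by auto
  have L2: "L2_on ?S (\<lambda>z. u (fst z) (snd z))"
    using lim_u[OF T] by (simp add: L2H01_def)
  have "AE z in lborel. z \<in> ?B \<longrightarrow> u (fst z) (snd z) \<le> 1"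
  proof (rule AE_le_1_if_powr_integrals_bounded[where U="\<lambda>k z. U k (fst z) (snd z)" and u="\<lambda>z. u (fst z) (snd z)"])
    show "set_integrable lborel ?B (\<lambda>z. U k (fst z) (snd z) powr p k)" for k
      by (rule powr_integrable[OF T B])
    show "set_integrable lborel ?S (\<lambda>z. (U k (fst z) (snd z) - u (fst z) (snd z))\<^sup>2)" for k
      by (rule set_integrable_L2_diff_square[OF solution_on_cyl(1)[OF T] L2])
    show "set_borel_measurable lborel ?S (\<lambda>z. u (fst z) (snd z))"
      using L2 by (simp add: L2_on_def)
  qed (use C B strong[OF T] p_lim p_pos cyl_sets[OF open_domain] in auto)
  then show ?thesis
    using r(1) by (intro exI[of _ "r / 2"]) auto
qed

lemma AE_le_1_outside:
  "AE z in lborel. fst z > 0 \<and> snd z \<in> \<Omega> - \<Omega>0 \<longrightarrow> u (fst z) (snd z) \<le> 1"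
proof -
  have "AE z in lborel. z \<in> {z. fst z > 0 \<and> snd z \<in> \<Omega> - closure \<Omega>0} \<longrightarrow> u (fst z) (snd z) \<le> 1"
    by (rule AE_if_locally_AE) (use AE_le_1_near in fastforce)
  moreover have "AE z in (lborel :: (real \<times> 'a) measure). snd z \<notin> frontier \<Omega>0"
    by (rule AE_lborel_snd[OF AE_not_in[OF frontier_null_if_smooth_boundary[OF Omega0]]])
  ultimately show ?thesis
    by eventually_elim (auto simp: frontier_def interior_open[OF Omega0(1)])
qed

lemma AE_in_K0: "AE t in lborel. t > 0 \<longrightarrow> u t \<in> K0 \<Omega> \<Omega>0"
proof -
  have "AE t in lborel. AE x in lborel. t > 0 \<and> x \<in> \<Omega> - \<Omega>0 \<longrightarrow> u t x \<le> 1"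
    using AE_lborel_prod_iterated[OF AE_le_1_outside] by simp
  moreover have "AE t in lborel. \<forall>n. t \<in> {0<..<real (Suc n)} \<longrightarrow> H01_grad \<Omega> (u t) (Gu t)"
    unfolding AE_all_countable using lim_u by (simp add: L2H01_def)
  ultimately show ?thesis
  proof eventually_elim
    case (elim t)
    show ?case
    proof
      assume "t > 0"
      obtain n where "t < real (Suc n)"
        using reals_Archimedean2[of t] by (meson less_Suc_eq of_nat_less_iff order_less_trans)
      then have "H01 \<Omega> (u t)"
        using elim(2) \<open>t > 0\<close> by (auto simp: H01_def)
      moreover have "AE x in lborel. x \<in> \<Omega> - \<Omega>0 \<longrightarrow> u t x \<le> 1"
        using elim(1) by eventually_elim (use \<open>t > 0\<close> in auto)
      ultimately show "u t \<in> K0 \<Omega> \<Omega>0"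
        by (simp add: K0_def)
    qed
  qed
qed

end

theorem lemma2p4:
  fixes \<Omega> \<Omega>0 :: "'a::euclidean_space set"
    and a :: real and b u0 :: "'a \<Rightarrow> real"
    and p :: "nat \<Rightarrow> real"
    and U :: "nat \<Rightarrow> real \<Rightarrow> 'a \<Rightarrow> real" and GU :: "nat \<Rightarrow> real \<Rightarrow> 'a \<Rightarrow> 'a"
    and DU :: "nat \<Rightarrow> real \<Rightarrow> 'a \<Rightarrow> real"
    and u :: "real \<Rightarrow> 'a \<Rightarrow> real" and Gu :: "real \<Rightarrow> 'a \<Rightarrow> 'a" and Du :: "real \<Rightarrow> 'a \<Rightarrow> real"
  assumes dom: "smooth_domain \<Omega>"
    and a_pos: "a > 0"
    and b_Linf: "Linfty_on \<Omega> b"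
    and b_nonneg: "AE x in lborel. x \<in> \<Omega> \<longrightarrow> b x \<ge> 0"
    and Omega0: "open \<Omega>0" "smooth_boundary \<Omega>0"
    and b_zero: "AE x in lborel. x \<in> \<Omega> \<inter> \<Omega>0 \<longrightarrow> b x = 0"
    and b_pos: "\<And>\<Omega>'. open \<Omega>' \<Longrightarrow> compact (closure \<Omega>') \<Longrightarrow> closure \<Omega>' \<subseteq> \<Omega> - \<Omega>0 \<Longrightarrow>
                  \<exists>bl>0. AE x in lborel. x \<in> \<Omega>' \<longrightarrow> b x \<ge> bl"
    and u0_H01: "H01 \<Omega> u0" and u0_Linf: "Linfty_on \<Omega> u0"
    and u0_bounds: "AE x in lborel. x \<in> \<Omega> - \<Omega>0 \<longrightarrow> 0 \<le> u0 x \<and> u0 x \<le> 1"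
    and p_gt1: "\<And>k. p k > 1"
    and p_lim: "filterlim p at_top sequentially"
    and sol: "\<And>k. global_solution \<Omega> a b (p k) u0 (U k) (GU k) (DU k)"
    and lim_u: "\<And>T. T > 0 \<Longrightarrow> L2H01 \<Omega> T u Gu \<and> time_deriv \<Omega> T u Du"
    and strong: "\<And>T. T > 0 \<Longrightarrow>
       (\<lambda>k. LINT z:cyl \<Omega> T|lborel. (U k (fst z) (snd z) - u (fst z) (snd z))\<^sup>2) \<longlonglongrightarrow> 0"
    and weak_u: "\<And>T. T > 0 \<Longrightarrow>
       weak_L2 (cyl \<Omega> T) (\<lambda>k z. U k (fst z) (snd z)) (\<lambda>z. u (fst z) (snd z))"
    and weak_grad: "\<And>T. T > 0 \<Longrightarrow>
       weak_L2v (cyl \<Omega> T) (\<lambda>k z. GU k (fst z) (snd z)) (\<lambda>z. Gu (fst z) (snd z))"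
    and weak_dt: "\<And>T. T > 0 \<Longrightarrow>
       weak_L2 (cyl \<Omega> T) (\<lambda>k z. DU k (fst z) (snd z)) (\<lambda>z. Du (fst z) (snd z))"
  shows "AE t in lborel. t > 0 \<longrightarrow> u t \<in> K0 \<Omega> \<Omega>0"
proof -
  interpret large_exponent_limit \<Omega> \<Omega>0 a b u0 p U GU DU u Gu Du
    using dom b_Linf b_nonneg Omega0 b_pos p_gt1 p_lim sol lim_u strong weak_u weak_grad weak_dt
    by unfold_locales (auto simp: smooth_domain_def less_trans[OF zero_less_one])
  show ?thesis
    by (rule AE_in_K0)
qed

end
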